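(* Let $(\mathsf{X},\mu)$, $(\mathsf{Y},\nu)$ be Polish probability spaces, $c:\mathsf{X}\times\mathsf{Y}\to[0,\infty)$ continuous, $\pi_\varepsilon$ the $(c,\varepsilon)$-cyclically invariant coupling for each $\varepsilon>0$ (assumed to exist), and assume $\pi_\varepsilon\to\pi_*$ weakly as $\varepsilon\to0$ for some $\pi_*\in\Pi(\mu,\nu)$. Let $\Gamma:=\operatorname{spt}\pi_*$ and let $I$ be defined from $\Gamma$ as below. Then for any compact set $C\subset\mathsf{X}\times\mathsf{Y}$, $$\limsup_{\varepsilon\to0}\varepsilon\log\pi_\varepsilon(C)\le-\inf_{(x,y)\in C}I(x,y).$$
   Context: $\Pi(\mu,\nu)$ is the set of couplings of $\mu,\nu$ and $P:=\mu\otimes\nu$. A coupling $\pi\in\Pi(\mu,\nu)$ is $(c,\varepsilon)$-cyclically invariant if $\pi\sim P$ and its density admits a version $\frac{d\pi}{dP}:\mathsf{X}\times\mathsf{Y}\to(0,\infty)$ such that $\prod_{i=1}^k\frac{d\pi}{dP}(x_i,y_i)=\exp\big(-\frac1\varepsilon[\sum_{i=1}^k c(x_i,y_i)-\sum_{i=1}^k c(x_i,y_{i+1})]\big)\prod_{i=1}^k\frac{d\pi}{dP}(x_i,y_{i+1})$ for all $k\in\mathbb{N}$ and $(x_i,y_i)_{i=1}^k$, with $y_{k+1}:=y_1$; it is unique if it exists. The support $\Gamma$ of such a limit is $c$-cyclically monotone. The function $I:\mathsf{X}\times\mathsf{Y}\to[0,\infty]$ is $$I(x,y):=\sup_{k\ge2}\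 \sup_{(x_i,y_i)_{i=2}^k\subset\Gamma}\ \sup_{\sigma\in\Sigma(k)}\ \sum_{i=1}^k c(x_i,y_i)-\sum_{i=1}^k c(x_i,y_{\sigma(i)}),\quad (x_1,y_1):=(x,y),$$ where $\Sigma(k)$ is the set of permutations of $\{1,\dots,k\}$. *)

theory Defs
  imports "HOL-Probability.Probability"
begin

definition coupling :: "'a measure \<Rightarrow> 'b measure \<Rightarrow> ('a \<times> 'b) measure \<Rightarrow> bool" where
  "coupling \<mu> \<nu> \<pi> \<longleftrightarrow> prob_space \<pi> \<and> sets \<pi> = sets (\<mu> \<Otimes>\<^sub>M \<nu>)
     \<and> distr \<pi> \<mu> fst = \<mu> \<and> distr \<pi> \<nu> snd = \<nu>"

text \<open>(c,eps)-cyclically invariant coupling; the cycle (x_i,y_i), i<k, is closed by y_k := y_0.\<close>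
definition cyclically_invariant ::
  "('a \<Rightarrow> 'b \<Rightarrow> real) \<Rightarrow> real \<Rightarrow> 'a measure \<Rightarrow> 'b measure \<Rightarrow> ('a \<times> 'b) measure \<Rightarrow> bool" where
  "cyclically_invariant c \<epsilon> \<mu> \<nu> \<pi> \<longleftrightarrow>
     coupling \<mu> \<nu> \<pi> \<and>
     absolutely_continuous (\<mu> \<Otimes>\<^sub>M \<nu>) \<pi> \<and> absolutely_continuous \<pi> (\<mu> \<Otimes>\<^sub>M \<nu>) \<and>
     (\<exists>f :: 'a \<times> 'b \<Rightarrow> real.
        f \<in> borel_measurable (\<mu> \<Otimes>\<^sub>M \<nu>) \<and> (\<forall>z. 0 < f z) \<and>
        \<pi> = density (\<mu> \<Otimes>\<^sub>M \<nu>) (\<lambda>z. ennreal (f z)) \<and>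
        (\<forall>k::nat. \<forall>(x :: nat \<Rightarrow> 'a) (y :: nat \<Rightarrow> 'b). 1 \<le> k \<longrightarrow>
           (\<Prod>i<k. f (x i, y i)) =
           exp (- (1 / \<epsilon>) * ((\<Sum>i<k. c (x i) (y i)) - (\<Sum>i<k. c (x i) (y (Suc i mod k)))))
           * (\<Prod>i<k. f (x i, y (Suc i mod k)))))"

definition support :: "('c::topological_space) measure \<Rightarrow> 'c set" where
  "support M = {z. \<forall>U. open U \<longrightarrow> z \<in> U \<longrightarrow> emeasure M U \<noteq> 0}"

definition weak_conv_at0 :: "(real \<Rightarrow> ('c::topological_space) measure) \<Rightarrow> 'c measure \<Rightarrow> bool" where
  "weak_conv_at0 P Q \<longleftrightarrow>
     (\<forall>g :: 'c \<Rightarrow> real. continuous_on UNIV g \<longrightarrow> bounded (range g) \<longrightarrow>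
        ((\<lambda>\<epsilon>. integral\<^sup>L (P \<epsilon>) g) \<longlongrightarrow> integral\<^sup>L Q g) (at_right 0))"

text \<open>The rate function I; index 0 plays the role of index 1 in the paper.\<close>
definition rate_I :: "('a \<Rightarrow> 'b \<Rightarrow> real) \<Rightarrow> ('a \<times> 'b) set \<Rightarrow> 'a \<Rightarrow> 'b \<Rightarrow> ereal" where
  "rate_I c \<Gamma> x y = Sup {ereal ((\<Sum>i<k. c (xs i) (ys i)) - (\<Sum>i<k. c (xs i) (ys (\<sigma> i))))
      | (k::nat) xs ys \<sigma>. 2 \<le> k \<and> xs 0 = x \<and> ys 0 = y \<and> (\<forall>i\<in>{1..<k}. (xs i, ys i) \<in> \<Gamma>)
                 \<and> \<sigma> permutes {..<k}}"

definition eps_log :: "real \<Rightarrow> real \<Rightarrow> ereal" where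
  "eps_log \<epsilon> p = (if p = 0 then -\<infinity> else ereal (\<epsilon> * ln p))"

end

(* Cyclic invariance for 2-cycles forces the density of pi_eps to have the Schroedinger form
   a(x) b(y) exp(-c(x,y)/eps). On boxes A_i x B_j so small that c varies by at most eta there,
   pi_eps(A_i x B_j) is therefore exp(-c(x_i,y_j)/eps) alpha_i beta_j up to a factor exp(+-eta/eps).
   Comparing the diagonal product over i with the product along a permutation sigma, which is
   at most 1, gives
     prod_i pi_eps(A_i x B_i) <= exp(-(sum_i c(x_i,y_i) - sum_i c(x_i,y_sigma(i)) - 2 k eta)/eps).
   For i >= 1 the points (x_i,y_i) lie in spt pi_*, so by weak convergence pi_eps(A_i x B_i) stays
   bounded below, and the box around (x_0,y_0) = (x,y) has mass at most exp(-t/eps) for every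
   t < I(x,y). Finitely many such boxes cover the compact set C. *)

theory Submission
  imports Defs
begin

lemma two_cycle_invariance_factorization:
  fixes f :: "'a \<times> 'b \<Rightarrow> real" and c :: "'a \<Rightarrow> 'b \<Rightarrow> real"
  assumes pos: "f (x0, y0) > 0" and eps: "\<epsilon> \<noteq> 0"
    and swap: "f (x, y) * f (x0, y0) =
      exp (- (c x y + c x0 y0 - c x y0 - c x0 y) / \<epsilon>) * (f (x, y0) * f (x0, y))"
  shows "f (x, y) = (f (x, y0) * exp (c x y0 / \<epsilon>)) *
           (f (x0, y) * exp (c x0 y / \<epsilon>) * exp (- c x0 y0 / \<epsilon>) / f (x0, y0)) * exp (- c x y / \<epsilon>)"
proof -
  have "exp (- (c x y + c x0 y0 - c x y0 - c x0 y) / \<epsilon>) =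
     exp (- c x y / \<epsilon>) * exp (- c x0 y0 / \<epsilon>) * exp (c x y0 / \<epsilon>) * exp (c x0 y / \<epsilon>)"
    using eps by (simp add: exp_add[symmetric] diff_divide_distrib add_divide_distrib)
  then show ?thesis using swap pos by (simp add: field_simps)
qed

lemma cyclically_invariant_factorization:
  fixes \<mu> :: "('a::second_countable_topology) measure" and \<nu> :: "('b::second_countable_topology) measure"
  assumes ci: "cyclically_invariant c \<epsilon> \<mu> \<nu> \<pi>" and eps: "\<epsilon> > 0"
    and mu: "sets \<mu> = sets borel" and nu: "sets \<nu> = sets borel"
    and cc: "continuous_on UNIV (\<lambda>z. c (fst z) (snd z))"
  obtains f a b where "f \<in> borel_measurable (\<mu> \<Otimes>\<^sub>M \<nu>)" "\<pi> = density (\<mu> \<Otimes>\<^sub>M \<nu>) (\<lambda>z. ennreal (f z))"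
    and "a \<in> borel_measurable \<mu>" "b \<in> borel_measurable \<nu>" "\<forall>x. 0 \<le> a x" "\<forall>y. 0 \<le> b y"
    and "\<forall>x y. f (x, y) = a x * b y * exp (- c x y / \<epsilon>)"
proof -
  obtain f :: "'a \<times> 'b \<Rightarrow> real" where fm: "f \<in> borel_measurable (\<mu> \<Otimes>\<^sub>M \<nu>)" and fp: "\<forall>z. 0 < f z"
    and pd: "\<pi> = density (\<mu> \<Otimes>\<^sub>M \<nu>) (\<lambda>z. ennreal (f z))"
    and cyc: "\<forall>k::nat. \<forall>(x :: nat \<Rightarrow> 'a) (y :: nat \<Rightarrow> 'b). 1 \<le> k \<longrightarrow>
           (\<Prod>i<k. f (x i, y i)) =
           exp (- (1 / \<epsilon>) * ((\<Sum>i<k. c (x i) (y i)) - (\<Sum>i<k. c (x i) (y (Suc i mod k)))))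
           * (\<Prod>i<k. f (x i, y (Suc i mod k)))"
    using ci unfolding cyclically_invariant_def by blast
  \<comment> \<open>Any base point \<open>(x0, y0)\<close> will do.\<close>
  define x0 :: 'a where "x0 = undefined"
  define y0 :: 'b where "y0 = undefined"
  define a where "a x = f (x, y0) * exp (c x y0 / \<epsilon>)" for x
  define b where "b y = f (x0, y) * exp (c x0 y / \<epsilon>) * exp (- c x0 y0 / \<epsilon>) / f (x0, y0)" for y
  have fe: "\<forall>x y. f (x, y) = a x * b y * exp (- c x y / \<epsilon>)"
  proof (intro allI)
    fix x y
    have "- (1 / \<epsilon>) * ((c x y + c x0 y0) - (c x y0 + c x0 y)) = - (c x y + c x0 y0 - c x y0 - c x0 y) / \<epsilon>"
      by (simp add: field_split_simps)
    then have "f (x, y) * f (x0, y0) =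
        exp (- (c x y + c x0 y0 - c x y0 - c x0 y) / \<epsilon>) * (f (x, y0) * f (x0, y))"
      using cyc[rule_format, of 2 "\<lambda>i. if i = 0 then x else x0" "\<lambda>i. if i = 0 then y else y0"]
      by (simp add: numeral_2_eq_2)
    then show "f (x, y) = a x * b y * exp (- c x y / \<epsilon>)"
      unfolding a_def b_def using fp eps by (intro two_cycle_invariance_factorization) auto
  qed
  have "space \<mu> = UNIV" "space \<nu> = UNIV"
    using mu nu by (metis sets_eq_imp_space_eq space_borel)+
  then have "(\<lambda>x. f (x, y0)) \<in> borel_measurable \<mu>" "(\<lambda>y. f (x0, y)) \<in> borel_measurable \<nu>"
    using measurable_compose[OF measurable_Pair2'[of y0 \<nu> \<mu>] fm]
      measurable_compose[OF measurable_Pair1'[of x0 \<mu> \<nu>] fm] by simp_all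
  moreover have "(\<lambda>x. c x y0) \<in> borel_measurable \<mu>" "(\<lambda>y. c x0 y) \<in> borel_measurable \<nu>"
    using borel_measurable_continuous_Pair[OF measurable_ident_sets[OF refl] measurable_const cc]
      borel_measurable_continuous_Pair[OF measurable_const measurable_ident_sets[OF refl] cc]
    by (subst measurable_cong_sets[OF mu refl] measurable_cong_sets[OF nu refl], simp)+
  ultimately have "a \<in> borel_measurable \<mu>" "b \<in> borel_measurable \<nu>"
    unfolding a_def b_def by measurable
  moreover have "\<forall>x. 0 \<le> a x" "\<forall>y. 0 \<le> b y"
    unfolding a_def b_def using fp by (simp_all add: less_imp_le)
  ultimately show ?thesis using that[OF fm pd] fe by blast
qed

lemma coupling_sets_borel:
  fixes \<mu> :: "('a::second_countable_topology) measure" and \<nu> :: "('b::second_countable_topology) measure"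
  assumes "coupling \<mu> \<nu> \<pi>" "sets \<mu> = sets borel" "sets \<nu> = sets borel"
  shows "sets \<pi> = sets borel"
proof -
  have "sets \<pi> = sets (\<mu> \<Otimes>\<^sub>M \<nu>)" using assms(1) unfolding coupling_def by simp
  also have "\<dots> = sets (borel \<Otimes>\<^sub>M borel)" by (rule sets_pair_measure_cong) (use assms in auto)
  finally show ?thesis by (simp only: borel_prod)
qed

lemma cyclically_invariant_prob_space_borel:
  fixes \<mu> :: "('a::second_countable_topology) measure" and \<nu> :: "('b::second_countable_topology) measure"
  assumes "cyclically_invariant c \<epsilon> \<mu> \<nu> \<pi>" "sets \<mu> = sets borel" "sets \<nu> = sets borel"
  shows "prob_space \<pi>" "sets \<pi> = sets borel"
proof -
  have "coupling \<mu> \<nu> \<pi>" using assms(1) unfolding cyclically_invariant_def by (rule conjunct1)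
  then show "prob_space \<pi>" "sets \<pi> = sets borel"
    using coupling_sets_borel[OF _ assms(2,3)] unfolding coupling_def by blast+
qed

lemma nn_integral_pair_measure_mult:
  fixes g :: "'a \<Rightarrow> ennreal" and h :: "'b \<Rightarrow> ennreal"
  assumes "sigma_finite_measure N" "g \<in> borel_measurable M" "h \<in> borel_measurable N"
  shows "(\<integral>\<^sup>+ z. g (fst z) * h (snd z) \<partial>(M \<Otimes>\<^sub>M N)) = (\<integral>\<^sup>+ x. g x \<partial>M) * (\<integral>\<^sup>+ y. h y \<partial>N)"
proof -
  have "(\<integral>\<^sup>+ z. g (fst z) * h (snd z) \<partial>(M \<Otimes>\<^sub>M N)) = (\<integral>\<^sup>+ x. \<integral>\<^sup>+ y. g x * h y \<partial>N \<partial>M)"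
    using sigma_finite_measure.nn_integral_fst[OF assms(1), of "\<lambda>z. g (fst z) * h (snd z)" M] assms
    by simp
  also have "\<dots> = (\<integral>\<^sup>+ x. g x * (\<integral>\<^sup>+ y. h y \<partial>N) \<partial>M)"
    using assms by (simp add: nn_integral_cmult)
  also have "\<dots> = (\<integral>\<^sup>+ x. g x \<partial>M) * (\<integral>\<^sup>+ y. h y \<partial>N)"
    using assms by (simp add: nn_integral_multc)
  finally show ?thesis .
qed

lemma emeasure_factorized_density_Times_bounds:
  fixes a :: "'a \<Rightarrow> real" and b :: "'b \<Rightarrow> real" and f :: "'a \<times> 'b \<Rightarrow> real"
  assumes N: "sigma_finite_measure \<nu>" and A: "A \<in> sets \<mu>" and B: "B \<in> sets \<nu>"
    and am: "a \<in> borel_measurable \<mu>" and bm: "b \<in> borel_measurable \<nu>"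
    and fm: "f \<in> borel_measurable (\<mu> \<Otimes>\<^sub>M \<nu>)"
    and an: "\<forall>x. 0 \<le> a x" and bn: "\<forall>y. 0 \<le> b y"
    and fe: "\<forall>x y. f (x, y) = a x * b y * exp (- c x y / \<epsilon>)"
    and eps: "\<epsilon> > 0"
    and cb: "\<forall>x\<in>A. \<forall>y\<in>B. \<bar>c x y - c0\<bar> \<le> \<eta>"
  shows "emeasure (density (\<mu> \<Otimes>\<^sub>M \<nu>) (\<lambda>z. ennreal (f z))) (A \<times> B) \<le>
          ennreal (exp (- (c0 - \<eta>) / \<epsilon>)) * ((\<integral>\<^sup>+ x\<in>A. ennreal (a x) \<partial>\<mu>) * (\<integral>\<^sup>+ y\<in>B. ennreal (b y) \<partial>\<nu>))"
    and "ennreal (exp (- (c0 + \<eta>) / \<epsilon>)) * ((\<integral>\<^sup>+ x\<in>A. ennreal (a x) \<partial>\<mu>) * (\<integral>\<^sup>+ y\<in>B. ennreal (b y) \<partial>\<nu>))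
          \<le> emeasure (density (\<mu> \<Otimes>\<^sub>M \<nu>) (\<lambda>z. ennreal (f z))) (A \<times> B)"
proof -
  define g where "g z = (ennreal (a (fst z)) * indicator A (fst z)) * (ennreal (b (snd z)) * indicator B (snd z))" for z
  have em: "emeasure (density (\<mu> \<Otimes>\<^sub>M \<nu>) (\<lambda>z. ennreal (f z))) (A \<times> B)
      = (\<integral>\<^sup>+ z. ennreal (f z) * indicator (A \<times> B) z \<partial>(\<mu> \<Otimes>\<^sub>M \<nu>))"
    using A B fm by (simp add: emeasure_density)
  have prod: "(\<integral>\<^sup>+ z. g z \<partial>(\<mu> \<Otimes>\<^sub>M \<nu>)) = (\<integral>\<^sup>+ x\<in>A. ennreal (a x) \<partial>\<mu>) * (\<integral>\<^sup>+ y\<in>B. ennreal (b y) \<partial>\<nu>)"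
    unfolding g_def by (rule nn_integral_pair_measure_mult[OF N]) (use am bm A B in auto)
  have gm: "g \<in> borel_measurable (\<mu> \<Otimes>\<^sub>M \<nu>)"
    unfolding g_def using am bm A B by measurable
  have pointwise: "ennreal (exp (- (c0 + \<eta>) / \<epsilon>)) * g z \<le> ennreal (f z) * indicator (A \<times> B) z
      \<and> ennreal (f z) * indicator (A \<times> B) z \<le> ennreal (exp (- (c0 - \<eta>) / \<epsilon>)) * g z" for z
  proof (cases z)
    case (Pair x y)
    show ?thesis
    proof (cases "x \<in> A \<and> y \<in> B")
      case True
      then have "\<bar>c x y - c0\<bar> \<le> \<eta>" using cb by blast
      then have "exp (- (c0 + \<eta>) / \<epsilon>) \<le> exp (- c x y / \<epsilon>)" "exp (- c x y / \<epsilon>) \<le> exp (- (c0 - \<eta>) / \<epsilon>)"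
        using eps by (auto simp: divide_simps abs_le_iff)
      with True show ?thesis
        using Pair fe an bn
        by (auto simp: g_def ennreal_mult[symmetric] mult.commute mult.left_commute intro!: ennreal_leI mult_left_mono)
    qed (auto simp: g_def Pair)
  qed
  show "emeasure (density (\<mu> \<Otimes>\<^sub>M \<nu>) (\<lambda>z. ennreal (f z))) (A \<times> B) \<le>
          ennreal (exp (- (c0 - \<eta>) / \<epsilon>)) * ((\<integral>\<^sup>+ x\<in>A. ennreal (a x) \<partial>\<mu>) * (\<integral>\<^sup>+ y\<in>B. ennreal (b y) \<partial>\<nu>))"
    unfolding em prod[symmetric] nn_integral_cmult[OF gm, symmetric]
    using pointwise by (intro nn_integral_mono) blast
  show "ennreal (exp (- (c0 + \<eta>) / \<epsilon>)) * ((\<integral>\<^sup>+ x\<in>A. ennreal (a x) \<partial>\<mu>) * (\<integral>\<^sup>+ y\<in>B. ennreal (b y) \<partial>\<nu>))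
          \<le> emeasure (density (\<mu> \<Otimes>\<^sub>M \<nu>) (\<lambda>z. ennreal (f z))) (A \<times> B)"
    unfolding em prod[symmetric] nn_integral_cmult[OF gm, symmetric]
    using pointwise by (intro nn_integral_mono) blast
qed

lemma prod_diagonal_mult_permuted_le:
  fixes P :: "nat \<Rightarrow> nat \<Rightarrow> ennreal" and \<alpha> \<beta> :: "nat \<Rightarrow> ennreal" and u l :: "nat \<Rightarrow> nat \<Rightarrow> real"
  assumes sig: "\<sigma> permutes {..<k}" and nonneg: "\<forall>i j. 0 \<le> u i j \<and> 0 \<le> l i j"
    and up: "\<forall>i<k. \<forall>j<k. P i j \<le> ennreal (u i j) * (\<alpha> i * \<beta> j)"
    and lo: "\<forall>i<k. \<forall>j<k. ennreal (l i j) * (\<alpha> i * \<beta> j) \<le> P i j"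
    and le1: "\<forall>i j. P i j \<le> 1"
  shows "(\<Prod>i<k. P i i) * ennreal (\<Prod>i<k. l i (\<sigma> i)) \<le> ennreal (\<Prod>i<k. u i i)"
proof -
  \<comment> \<open>Both products are comparable with the same rank-one factor Q; along \<sigma> it is at most 1.\<close>
  define Q where "Q = (\<Prod>i<k. \<alpha> i) * (\<Prod>i<k. \<beta> i)"
  have "(\<Prod>i<k. P i i) \<le> (\<Prod>i<k. ennreal (u i i) * (\<alpha> i * \<beta> i))"
    by (rule prod_mono_ennreal) (use up in auto)
  also have "\<dots> = ennreal (\<Prod>i<k. u i i) * Q"
    unfolding Q_def using nonneg by (simp add: prod.distrib prod_ennreal)
  finally have diagonal: "(\<Prod>i<k. P i i) \<le> ennreal (\<Prod>i<k. u i i) * Q" .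
  have "(\<Prod>i<k. \<beta> (\<sigma> i)) = (\<Prod>i<k. \<beta> i)"
    using prod.permute[OF sig, of \<beta>] by (simp add: comp_def)
  then have "ennreal (\<Prod>i<k. l i (\<sigma> i)) * Q = (\<Prod>i<k. ennreal (l i (\<sigma> i)) * (\<alpha> i * \<beta> (\<sigma> i)))"
    unfolding Q_def using nonneg by (simp add: prod.distrib prod_ennreal)
  also have "\<dots> \<le> (\<Prod>i<k. P i (\<sigma> i))"
    by (rule prod_mono_ennreal) (use lo permutes_in_image[OF sig] in auto)
  also have "\<dots> \<le> 1"
    using prod_mono_ennreal[of "{..<k}" "\<lambda>i. P i (\<sigma> i)" "\<lambda>_. 1"] le1 by simp
  finally have permuted: "ennreal (\<Prod>i<k. l i (\<sigma> i)) * Q \<le> 1" .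
  have "(\<Prod>i<k. P i i) * ennreal (\<Prod>i<k. l i (\<sigma> i))
      \<le> ennreal (\<Prod>i<k. u i i) * (ennreal (\<Prod>i<k. l i (\<sigma> i)) * Q)"
    using mult_right_mono[OF diagonal, of "ennreal (\<Prod>i<k. l i (\<sigma> i))"] by (simp add: ac_simps)
  also have "\<dots> \<le> ennreal (\<Prod>i<k. u i i)"
    using mult_left_mono[OF permuted, of "ennreal (\<Prod>i<k. u i i)"] by simp
  finally show ?thesis .
qed

lemma prod_diagonal_le_exp_permuted:
  fixes P :: "nat \<Rightarrow> nat \<Rightarrow> ennreal" and \<alpha> \<beta> :: "nat \<Rightarrow> ennreal" and cc :: "nat \<Rightarrow> nat \<Rightarrow> real"
  assumes sig: "\<sigma> permutes {..<k}" and eps: "\<epsilon> > 0"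
    and up: "\<forall>i<k. \<forall>j<k. P i j \<le> ennreal (exp (- (cc i j - \<eta>) / \<epsilon>)) * (\<alpha> i * \<beta> j)"
    and lo: "\<forall>i<k. \<forall>j<k. ennreal (exp (- (cc i j + \<eta>) / \<epsilon>)) * (\<alpha> i * \<beta> j) \<le> P i j"
    and le1: "\<forall>i j. P i j \<le> 1"
  shows "(\<Prod>i<k. P i i) \<le> ennreal (exp (- ((\<Sum>i<k. cc i i) - (\<Sum>i<k. cc i (\<sigma> i)) - 2 * real k * \<eta>) / \<epsilon>))"
proof -
  define X1 where "X1 = (\<Prod>i<k. exp (- (cc i i - \<eta>) / \<epsilon>))"
  define X2 where "X2 = (\<Prod>i<k. exp (- (cc i (\<sigma> i) + \<eta>) / \<epsilon>))"
  have "(\<Prod>i<k. P i i) * ennreal X2 \<le> ennreal X1"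
    unfolding X1_def X2_def using sig up lo le1
    by (intro prod_diagonal_mult_permuted_le[where u = "\<lambda>i j. exp (- (cc i j - \<eta>) / \<epsilon>)"
          and l = "\<lambda>i j. exp (- (cc i j + \<eta>) / \<epsilon>)"]) auto
  moreover obtain p where p: "(\<Prod>i<k. P i i) = ennreal p" "0 \<le> p"
    using prod_mono_ennreal[of "{..<k}" "\<lambda>i. P i i" "\<lambda>_. 1"] le1 by (cases "\<Prod>i<k. P i i") (auto simp: top_unique)
  moreover have "X2 > 0" unfolding X2_def by (simp add: prod_pos)
  ultimately have "p \<le> X1 / X2"
    by (simp add: ennreal_mult[symmetric] pos_le_divide_eq X1_def prod_nonneg)
  also have "X1 / X2 = exp (- ((\<Sum>i<k. cc i i) - (\<Sum>i<k. cc i (\<sigma> i)) - 2 * real k * \<eta>) / \<epsilon>)"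
    unfolding X1_def X2_def using eps
    by (simp add: exp_sum[symmetric] exp_diff[symmetric] sum_divide_distrib[symmetric] sum_subtractf
        sum.distrib field_simps)
  finally show ?thesis using p by (simp add: ennreal_leI)
qed

lemma cyclically_invariant_prod_Times_le:
  fixes \<mu> :: "('a::second_countable_topology) measure" and \<nu> :: "('b::second_countable_topology) measure"
    and c :: "'a \<Rightarrow> 'b \<Rightarrow> real" and \<pi> :: "('a \<times> 'b) measure"
  assumes mu: "sets \<mu> = sets borel" and nu: "prob_space \<nu>" "sets \<nu> = sets borel"
    and cc: "continuous_on UNIV (\<lambda>z. c (fst z) (snd z))"
    and ci: "cyclically_invariant c \<epsilon> \<mu> \<nu> \<pi>" and eps: "\<epsilon> > 0"
    and sig: "\<sigma> permutes {..<k}"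
    and A: "\<forall>i<k. A i \<in> sets borel" and B: "\<forall>i<k. B i \<in> sets borel"
    and close: "\<forall>i<k. \<forall>j<k. \<forall>x\<in>A i. \<forall>y\<in>B j. \<bar>c x y - c (xs i) (ys j)\<bar> \<le> \<eta>"
  shows "(\<Prod>i<k. measure \<pi> (A i \<times> B i)) \<le>
     exp (- ((\<Sum>i<k. c (xs i) (ys i)) - (\<Sum>i<k. c (xs i) (ys (\<sigma> i))) - 2 * real k * \<eta>) / \<epsilon>)"
proof -
  obtain f a b where fm: "f \<in> borel_measurable (\<mu> \<Otimes>\<^sub>M \<nu>)" and pd: "\<pi> = density (\<mu> \<Otimes>\<^sub>M \<nu>) (\<lambda>z. ennreal (f z))"
    and ab: "a \<in> borel_measurable \<mu>" "b \<in> borel_measurable \<nu>" "\<forall>x. 0 \<le> a x" "\<forall>y. 0 \<le> b y"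
    and fe: "\<forall>x y. f (x, y) = a x * b y * exp (- c x y / \<epsilon>)"
    using cyclically_invariant_factorization[OF ci eps mu nu(2) cc] by blast
  have prob: "prob_space \<pi>" by (rule cyclically_invariant_prob_space_borel(1)[OF ci mu nu(2)])
  have sf: "sigma_finite_measure \<nu>" using nu(1) by (simp add: prob_space_def finite_measure_def)
  define P where "P i j = emeasure \<pi> (A i \<times> B j)" for i j
  define \<alpha> where "\<alpha> i = (\<integral>\<^sup>+ x\<in>A i. ennreal (a x) \<partial>\<mu>)" for i
  define \<beta> where "\<beta> j = (\<integral>\<^sup>+ y\<in>B j. ennreal (b y) \<partial>\<nu>)" for j
  have AB: "A i \<in> sets \<mu>" "B j \<in> sets \<nu>" if "i < k" "j < k" for i j
    using A B that mu nu by simp_all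
  note bounds = emeasure_factorized_density_Times_bounds[OF sf AB ab(1,2) fm ab(3,4) fe eps]
  have "(\<Prod>i<k. P i i) \<le> ennreal (exp (- ((\<Sum>i<k. c (xs i) (ys i)) - (\<Sum>i<k. c (xs i) (ys (\<sigma> i))) - 2 * real k * \<eta>) / \<epsilon>))"
  proof (rule prod_diagonal_le_exp_permuted[where P = P and \<alpha> = \<alpha> and \<beta> = \<beta> and cc = "\<lambda>i j. c (xs i) (ys j)", OF sig eps])
    show "\<forall>i<k. \<forall>j<k. P i j \<le> ennreal (exp (- (c (xs i) (ys j) - \<eta>) / \<epsilon>)) * (\<alpha> i * \<beta> j)"
      unfolding P_def \<alpha>_def \<beta>_def pd using bounds(1) close by blast
    show "\<forall>i<k. \<forall>j<k. ennreal (exp (- (c (xs i) (ys j) + \<eta>) / \<epsilon>)) * (\<alpha> i * \<beta> j) \<le> P i j"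
      unfolding P_def \<alpha>_def \<beta>_def pd using bounds(2) close by blast
    show "\<forall>i j. P i j \<le> 1" unfolding P_def using prob by (simp add: prob_space.emeasure_le_1)
  qed
  moreover have "(\<Prod>i<k. P i i) = ennreal (\<Prod>i<k. measure \<pi> (A i \<times> B i))"
    unfolding P_def using prob
    by (simp add: finite_measure.emeasure_eq_measure prob_space_def prod_ennreal)
  ultimately show ?thesis by (simp add: ennreal_le_iff)
qed

lemma continuous_on_close_on_small_balls:
  fixes c :: "'a::metric_space \<Rightarrow> 'b::metric_space \<Rightarrow> real"
  assumes "continuous_on UNIV (\<lambda>z. c (fst z) (snd z))" "\<eta> > 0"
  shows "eventually (\<lambda>r. \<forall>x'\<in>ball x r. \<forall>y'\<in>ball y r. \<bar>c x' y' - c x y\<bar> \<le> \<eta>) (at_right 0)"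
proof -
  obtain d where d: "d > 0" "\<forall>z'. dist z' (x, y) < d \<longrightarrow> dist (c (fst z') (snd z')) (c x y) < \<eta>"
    using assms unfolding continuous_on_iff by (metis UNIV_I fst_conv snd_conv)
  have "\<bar>c x' y' - c x y\<bar> \<le> \<eta>" if "dist x x' < d/2" "dist y y' < d/2" for x' y'
  proof -
    have "dist (x', y') (x, y) \<le> dist x' x + dist y' y"
      unfolding dist_Pair_Pair by (intro sqrt_sum_squares_le_sum) auto
    then show ?thesis using that d(2)[rule_format, of "(x', y')"] by (simp add: dist_commute dist_real_def)
  qed
  then show ?thesis
    unfolding eventually_at_right_field using d(1) by (intro exI[of _ "d/2"]) auto
qed

lemma cyclically_invariant_prod_balls_le:
  fixes \<mu> :: "('a::{metric_space,second_countable_topology}) measure"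
    and \<nu> :: "('b::{metric_space,second_countable_topology}) measure"
    and c :: "'a \<Rightarrow> 'b \<Rightarrow> real" and \<pi> :: "real \<Rightarrow> ('a \<times> 'b) measure" and k :: nat
  assumes mu: "sets \<mu> = sets borel" and nu: "prob_space \<nu>" "sets \<nu> = sets borel"
    and cc: "continuous_on UNIV (\<lambda>z. c (fst z) (snd z))"
    and ci: "\<forall>\<epsilon>>0. cyclically_invariant c \<epsilon> \<mu> \<nu> (\<pi> \<epsilon>)"
    and sig: "\<sigma> permutes {..<k}" and k: "0 < k"
    and gain: "s < (\<Sum>i<k. c (xs i) (ys i)) - (\<Sum>i<k. c (xs i) (ys (\<sigma> i)))"
  obtains r where "r > 0"
    and "\<forall>\<epsilon>>0. (\<Prod>i<k. measure (\<pi> \<epsilon>) (ball (xs i) r \<times> ball (ys i) r)) \<le> exp (- s / \<epsilon>)"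
proof -
  define \<eta> where "\<eta> = ((\<Sum>i<k. c (xs i) (ys i)) - (\<Sum>i<k. c (xs i) (ys (\<sigma> i))) - s) / (2 * real k)"
  have \<eta>: "\<eta> > 0" unfolding \<eta>_def using gain k by simp
  have s: "s = (\<Sum>i<k. c (xs i) (ys i)) - (\<Sum>i<k. c (xs i) (ys (\<sigma> i))) - 2 * real k * \<eta>"
    unfolding \<eta>_def using k by simp
  have "eventually (\<lambda>r. \<forall>i\<in>{..<k}. \<forall>j\<in>{..<k}. \<forall>x'\<in>ball (xs i) r. \<forall>y'\<in>ball (ys j) r.
      \<bar>c x' y' - c (xs i) (ys j)\<bar> \<le> \<eta>) (at_right 0)"
    by (intro eventually_ball_finite finite_lessThan ballI continuous_on_close_on_small_balls[OF cc \<eta>])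
  then have "eventually (\<lambda>r. 0 < r \<and> (\<forall>i\<in>{..<k}. \<forall>j\<in>{..<k}. \<forall>x'\<in>ball (xs i) r. \<forall>y'\<in>ball (ys j) r.
      \<bar>c x' y' - c (xs i) (ys j)\<bar> \<le> \<eta>)) (at_right 0)"
    by (rule eventually_conj[OF eventually_at_right_less])
  then obtain r where r: "r > 0" and close: "\<forall>i\<in>{..<k}. \<forall>j\<in>{..<k}. \<forall>x'\<in>ball (xs i) r. \<forall>y'\<in>ball (ys j) r.
      \<bar>c x' y' - c (xs i) (ys j)\<bar> \<le> \<eta>"
    using eventually_happens'[OF trivial_limit_at_right_real] by blast
  have "(\<Prod>i<k. measure (\<pi> \<epsilon>) (ball (xs i) r \<times> ball (ys i) r)) \<le> exp (- s / \<epsilon>)" if "\<epsilon> > 0" for \<epsilon>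
    unfolding s using close ci that
    by (intro cyclically_invariant_prod_Times_le[OF mu nu cc _ that sig]) auto
  with r show ?thesis using that by blast
qed

lemma weak_conv_at0_support_mass_lower_bound:
  fixes \<pi> :: "real \<Rightarrow> ('c::metric_space) measure"
  assumes P: "\<forall>\<epsilon>>0. prob_space (\<pi> \<epsilon>) \<and> sets (\<pi> \<epsilon>) = sets borel"
    and Ps: "prob_space \<pi>\<^sub>s" "sets \<pi>\<^sub>s = sets borel"
    and W: "weak_conv_at0 \<pi> \<pi>\<^sub>s" and z0: "z0 \<in> support \<pi>\<^sub>s" and U: "open U" "z0 \<in> U"
  shows "\<exists>q>0. eventually (\<lambda>\<epsilon>. q \<le> measure (\<pi> \<epsilon>) U) (at_right 0)"
proof -
  obtain r where r: "r > 0" "ball z0 r \<subseteq> U" using U open_contains_ball by blast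
  define g where "g z = max 0 (1 - dist z z0 / r)" for z
  have gc: "continuous_on UNIV g" unfolding g_def by (intro continuous_intros) (use r in auto)
  have g01: "0 \<le> g z" "g z \<le> 1" for z using r unfolding g_def by auto
  have gU: "g z \<le> indicator U z" for z
    using r g01 unfolding g_def by (auto simp: indicator_def dist_commute subset_eq field_simps)
  have g_half: "1/2 * indicator (ball z0 (r/2)) z \<le> g z" for z
    using r g01 unfolding g_def by (auto simp: indicator_def dist_commute field_simps)
  have integrable: "integrable M g" "integrable M (indicator S :: 'c \<Rightarrow> real)"
    if "sets M = sets borel" "finite_measure M" "S \<in> sets borel" for M S
    using that borel_measurable_continuous_onI[OF gc] g01
    by (auto intro!: finite_measure.integrable_const_bound[where B=1] simp: measurable_cong_sets[OF that(1) refl])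
  define L where "L = integral\<^sup>L \<pi>\<^sub>s g"
  have fs: "finite_measure \<pi>\<^sub>s" using Ps by (simp add: prob_space_def)
  have "emeasure \<pi>\<^sub>s (ball z0 (r/2)) \<noteq> 0" using z0 r unfolding support_def by auto
  then have "measure \<pi>\<^sub>s (ball z0 (r/2)) > 0"
    using fs by (simp add: finite_measure.emeasure_eq_measure zero_less_measure_iff)
  moreover have "integral\<^sup>L \<pi>\<^sub>s (\<lambda>z. 1/2 * indicator (ball z0 (r/2)) z) \<le> L"
    unfolding L_def by (rule integral_mono) (use integrable[OF Ps(2) fs] g_half in auto)
  ultimately have Lpos: "L > 0" using Ps(2) by simp
  have "bounded (range g)" unfolding bounded_iff using g01 by (intro exI[of _ 1]) auto
  then have "((\<lambda>\<epsilon>. integral\<^sup>L (\<pi> \<epsilon>) g) \<longlongrightarrow> L) (at_right 0)"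
    using W gc unfolding weak_conv_at0_def L_def by blast
  then have "eventually (\<lambda>\<epsilon>. L/2 < integral\<^sup>L (\<pi> \<epsilon>) g) (at_right 0)"
    using Lpos by (intro order_tendstoD(1)) auto
  then have "eventually (\<lambda>\<epsilon>. L/2 \<le> measure (\<pi> \<epsilon>) U) (at_right 0)"
    using eventually_at_right_less[of 0]
  proof eventually_elim
    case (elim \<epsilon>)
    then have pe: "finite_measure (\<pi> \<epsilon>)" "sets (\<pi> \<epsilon>) = sets borel"
      using P by (auto simp: prob_space_def)
    have "integral\<^sup>L (\<pi> \<epsilon>) g \<le> integral\<^sup>L (\<pi> \<epsilon>) (indicator U)"
      by (rule integral_mono) (use integrable[OF pe(2,1)] U gU in auto)
    moreover have "space (\<pi> \<epsilon>) = UNIV" using pe(2) by (metis sets_eq_imp_space_eq space_borel)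
    ultimately show ?case using elim by simp
  qed
  then show ?thesis using Lpos by (intro exI[of _ "L/2"]) auto
qed

lemma weak_conv_at0_support_prod_lower_bound:
  fixes \<pi> :: "real \<Rightarrow> ('c::metric_space) measure"
  assumes P: "\<forall>\<epsilon>>0. prob_space (\<pi> \<epsilon>) \<and> sets (\<pi> \<epsilon>) = sets borel"
    and Ps: "prob_space \<pi>\<^sub>s" "sets \<pi>\<^sub>s = sets borel" and W: "weak_conv_at0 \<pi> \<pi>\<^sub>s"
    and I: "finite I" and U: "\<forall>i\<in>I. z i \<in> support \<pi>\<^sub>s \<and> open (U i) \<and> z i \<in> U i"
  shows "\<exists>R>0. eventually (\<lambda>\<epsilon>. R \<le> (\<Prod>i\<in>I. measure (\<pi> \<epsilon>) (U i))) (at_right 0)"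
proof -
  have "\<forall>i\<in>I. \<exists>q. q > 0 \<and> eventually (\<lambda>\<epsilon>. q \<le> measure (\<pi> \<epsilon>) (U i)) (at_right 0)"
  proof
    fix i assume "i \<in> I"
    with U have "z i \<in> support \<pi>\<^sub>s" "open (U i)" "z i \<in> U i" by blast+
    then show "\<exists>q. q > 0 \<and> eventually (\<lambda>\<epsilon>. q \<le> measure (\<pi> \<epsilon>) (U i)) (at_right 0)"
      by (rule weak_conv_at0_support_mass_lower_bound[OF P Ps W])
  qed
  from bchoice[OF this] obtain q
    where q: "\<forall>i\<in>I. q i > 0 \<and> eventually (\<lambda>\<epsilon>. q i \<le> measure (\<pi> \<epsilon>) (U i)) (at_right 0)"
    by blast
  then have "eventually (\<lambda>\<epsilon>. \<forall>i\<in>I. q i \<le> measure (\<pi> \<epsilon>) (U i)) (at_right 0)"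
    by (intro eventually_ball_finite I) blast
  then have "eventually (\<lambda>\<epsilon>. (\<Prod>i\<in>I. q i) \<le> (\<Prod>i\<in>I. measure (\<pi> \<epsilon>) (U i))) (at_right 0)"
    by eventually_elim (use q in \<open>auto intro: prod_mono less_imp_le\<close>)
  moreover have "(\<Prod>i\<in>I. q i) > 0" using q by (intro prod_pos) auto
  ultimately show ?thesis by blast
qed

lemma eventually_exp_neg_div_le_mult:
  fixes s t R :: real
  assumes "t < s" "0 < R"
  shows "eventually (\<lambda>\<epsilon>. exp (- s / \<epsilon>) \<le> R * exp (- t / \<epsilon>)) (at_right 0)"
proof -
  have "filterlim (\<lambda>\<epsilon>. (s - t) * inverse \<epsilon>) at_top (at_right 0)"
    using assms(1) by (intro filterlim_tendsto_pos_mult_at_top[OF tendsto_const _ filterlim_inverse_at_top_right]) simp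
  then have "((\<lambda>\<epsilon>. exp (- ((s - t) * inverse \<epsilon>))) \<longlongrightarrow> 0) (at_right 0)"
    by (intro filterlim_compose[OF exp_at_bot]) (simp add: filterlim_uminus_at_bot)
  then have "eventually (\<lambda>\<epsilon>. exp (- ((s - t) * inverse \<epsilon>)) < R) (at_right 0)"
    using assms(2) by (rule order_tendstoD(2))
  then show ?thesis
  proof eventually_elim
    case (elim \<epsilon>)
    have "- s / \<epsilon> = - ((s - t) * inverse \<epsilon>) + - t / \<epsilon>"
      by (simp add: divide_inverse algebra_simps)
    then have "exp (- s / \<epsilon>) = exp (- ((s - t) * inverse \<epsilon>)) * exp (- t / \<epsilon>)"
      by (simp add: exp_add[symmetric])
    then show ?case using elim by simp
  qed
qed

lemma rate_I_local_upper_bound: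
  fixes \<mu> :: "('a::polish_space) measure" and \<nu> :: "('b::polish_space) measure"
    and c :: "'a \<Rightarrow> 'b \<Rightarrow> real"
    and \<pi> :: "real \<Rightarrow> ('a \<times> 'b) measure" and \<pi>\<^sub>s :: "('a \<times> 'b) measure"
  assumes mu: "sets \<mu> = sets borel" and nu: "prob_space \<nu>" "sets \<nu> = sets borel"
    and cc: "continuous_on UNIV (\<lambda>z. c (fst z) (snd z))"
    and ci: "\<forall>\<epsilon>>0. cyclically_invariant c \<epsilon> \<mu> \<nu> (\<pi> \<epsilon>)"
    and cs: "coupling \<mu> \<nu> \<pi>\<^sub>s" and W: "weak_conv_at0 \<pi> \<pi>\<^sub>s"
    and lt: "ereal t < rate_I c (support \<pi>\<^sub>s) x y"
  shows "\<exists>U. open U \<and> (x, y) \<in> U \<and> eventually (\<lambda>\<epsilon>. measure (\<pi> \<epsilon>) U \<le> exp (- t / \<epsilon>)) (at_right 0)"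
proof -
  obtain k :: nat and xs :: "nat \<Rightarrow> 'a" and ys :: "nat \<Rightarrow> 'b" and \<sigma>
    where k: "2 \<le> k" and start: "xs 0 = x" "ys 0 = y"
      and on_support: "\<forall>i\<in>{1..<k}. (xs i, ys i) \<in> support \<pi>\<^sub>s" and sig: "\<sigma> permutes {..<k}"
      and gain: "t < (\<Sum>i<k. c (xs i) (ys i)) - (\<Sum>i<k. c (xs i) (ys (\<sigma> i)))"
    using lt unfolding rate_I_def less_Sup_iff by auto
  obtain s where ts: "t < s" and gain_s: "s < (\<Sum>i<k. c (xs i) (ys i)) - (\<Sum>i<k. c (xs i) (ys (\<sigma> i)))"
    using gain dense by blast
  obtain r where r: "r > 0"
    and prod_le: "\<forall>\<epsilon>>0. (\<Prod>i<k. measure (\<pi> \<epsilon>) (ball (xs i) r \<times> ball (ys i) r)) \<le> exp (- s / \<epsilon>)"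
    using cyclically_invariant_prod_balls_le[OF mu nu cc ci sig _ gain_s] k by auto
  define box where "box i = ball (xs i) r \<times> ball (ys i) r" for i
  have Pe: "\<forall>\<epsilon>>0. prob_space (\<pi> \<epsilon>) \<and> sets (\<pi> \<epsilon>) = sets borel"
    using cyclically_invariant_prob_space_borel[OF _ mu nu(2)] ci by blast
  have Ps: "prob_space \<pi>\<^sub>s" "sets \<pi>\<^sub>s = sets borel"
    using cs coupling_sets_borel[OF cs mu nu(2)] unfolding coupling_def by blast+
  have "\<forall>i\<in>{1..<k}. (xs i, ys i) \<in> support \<pi>\<^sub>s \<and> open (box i) \<and> (xs i, ys i) \<in> box i"
    using on_support r unfolding box_def by (auto intro: open_Times)
  from weak_conv_at0_support_prod_lower_bound[OF Pe Ps W finite_atLeastLessThan this]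
  obtain R where R: "R > 0"
    and R_le: "eventually (\<lambda>\<epsilon>. R \<le> (\<Prod>i\<in>{1..<k}. measure (\<pi> \<epsilon>) (box i))) (at_right 0)"
    by blast
  have "eventually (\<lambda>\<epsilon>. measure (\<pi> \<epsilon>) (box 0) \<le> exp (- t / \<epsilon>)) (at_right 0)"
    using R_le eventually_exp_neg_div_le_mult[OF ts R] eventually_at_right_less[of "0::real"]
  proof eventually_elim
    case (elim \<epsilon>)
    have "measure (\<pi> \<epsilon>) (box 0) * R \<le> measure (\<pi> \<epsilon>) (box 0) * (\<Prod>i\<in>{1..<k}. measure (\<pi> \<epsilon>) (box i))"
      using elim(1) by (simp add: mult_left_mono)
    also have "\<dots> = (\<Prod>i<k. measure (\<pi> \<epsilon>) (box i))"
      using k by (simp add: lessThan_atLeast0 prod.atLeast_Suc_lessThan)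
    also have "\<dots> \<le> R * exp (- t / \<epsilon>)"
      using prod_le elim(2,3) unfolding box_def by fastforce
    finally show ?case using R by (simp add: mult.commute)
  qed
  then show ?thesis using r start unfolding box_def
    by (intro exI[of _ "ball x r \<times> ball y r"]) (auto intro: open_Times)
qed

lemma compact_finite_cover_eventually_measure_le:
  fixes \<pi> :: "real \<Rightarrow> ('c::topological_space) measure"
  assumes "compact C" and P: "\<forall>\<epsilon>>0. finite_measure (\<pi> \<epsilon>) \<and> sets (\<pi> \<epsilon>) = sets borel"
    and local_bound: "\<forall>z\<in>C. \<exists>U. open U \<and> z \<in> U \<and> eventually (\<lambda>\<epsilon>. measure (\<pi> \<epsilon>) U \<le> g \<epsilon>) (at_right 0)"
  shows "\<exists>N::nat. eventually (\<lambda>\<epsilon>. measure (\<pi> \<epsilon>) C \<le> N * g \<epsilon>) (at_right 0)"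
proof -
  obtain U where U: "\<forall>z\<in>C. open (U z) \<and> z \<in> U z \<and> eventually (\<lambda>\<epsilon>. measure (\<pi> \<epsilon>) (U z) \<le> g \<epsilon>) (at_right 0)"
    using local_bound by metis
  obtain T where T: "T \<subseteq> C" "finite T" "C \<subseteq> \<Union> (U ` T)"
    by (rule compactE_image[OF \<open>compact C\<close>, of C U]) (use U in auto)
  have "eventually (\<lambda>\<epsilon>. \<forall>z\<in>T. measure (\<pi> \<epsilon>) (U z) \<le> g \<epsilon>) (at_right 0)"
    by (rule eventually_ball_finite) (use T U in auto)
  then have "eventually (\<lambda>\<epsilon>. measure (\<pi> \<epsilon>) C \<le> card T * g \<epsilon>) (at_right 0)"
    using eventually_at_right_less[of "0::real"]
  proof eventually_elim
    case (elim \<epsilon>)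
    then have fm: "finite_measure (\<pi> \<epsilon>)" and Us: "\<And>z. z \<in> T \<Longrightarrow> U z \<in> sets (\<pi> \<epsilon>)"
      using P U T(1) by auto
    have "measure (\<pi> \<epsilon>) C \<le> measure (\<pi> \<epsilon>) (\<Union> (U ` T))"
      using Us T by (intro finite_measure.finite_measure_mono[OF fm]) auto
    also have "\<dots> \<le> (\<Sum>z\<in>T. measure (\<pi> \<epsilon>) (U z))"
      by (rule measure_UNION_le) (use T Us in auto)
    also have "\<dots> \<le> (\<Sum>z\<in>T. g \<epsilon>)"
      by (rule sum_mono) (use elim in auto)
    finally show ?case by simp
  qed
  then show ?thesis by blast
qed

lemma Limsup_eps_log_le:
  assumes "\<forall>\<epsilon>. 0 \<le> p \<epsilon>" "0 \<le> N" "eventually (\<lambda>\<epsilon>. p \<epsilon> \<le> N * exp (- t / \<epsilon>)) (at_right 0)"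
  shows "Limsup (at_right 0) (\<lambda>\<epsilon>. eps_log \<epsilon> (p \<epsilon>)) \<le> ereal (- t)"
proof -
  have "eventually (\<lambda>\<epsilon>. eps_log \<epsilon> (p \<epsilon>) \<le> ereal (\<epsilon> * ln (N + 1) - t)) (at_right 0)"
    using assms(3) eventually_at_right_less[of "0::real"]
  proof eventually_elim
    case (elim \<epsilon>)
    show ?case
    proof (cases "p \<epsilon> = 0")
      case False
      then have "0 < p \<epsilon>" using assms(1) by (simp add: order_less_le)
      moreover have "p \<epsilon> \<le> (N + 1) * exp (- t / \<epsilon>)"
        using order_trans[OF elim(1) mult_right_mono[of N "N + 1" "exp (- t / \<epsilon>)"]] by simp
      ultimately have "ln (p \<epsilon>) \<le> ln ((N + 1) * exp (- t / \<epsilon>))"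
        using assms(2) by (subst ln_le_cancel_iff) auto
      also have "\<dots> = ln (N + 1) - t / \<epsilon>"
        using assms(2) by (simp add: ln_mult)
      finally have "\<epsilon> * ln (p \<epsilon>) \<le> \<epsilon> * ln (N + 1) - t"
        using elim(2) by (simp add: field_simps)
      then show ?thesis using False by (simp add: eps_log_def)
    qed (simp add: eps_log_def)
  qed
  then have "Limsup (at_right 0) (\<lambda>\<epsilon>. eps_log \<epsilon> (p \<epsilon>)) \<le> Limsup (at_right 0) (\<lambda>\<epsilon>. ereal (\<epsilon> * ln (N + 1) - t))"
    by (rule Limsup_mono)
  also have "\<dots> = ereal (- t)"
  proof (rule lim_imp_Limsup)
    have "((\<lambda>\<epsilon>::real. \<epsilon> * ln (N + 1) - t) \<longlongrightarrow> 0 * ln (N + 1) - t) (at_right 0)"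
      by (intro tendsto_intros)
    then show "((\<lambda>\<epsilon>. ereal (\<epsilon> * ln (N + 1) - t)) \<longlongrightarrow> ereal (- t)) (at_right 0)"
      by (simp add: tendsto_ereal)
  qed simp
  finally show ?thesis .
qed

lemma ereal_le_uminus_dense:
  fixes L m :: ereal
  assumes "\<And>t. ereal t < m \<Longrightarrow> L \<le> ereal (- t)"
  shows "L \<le> - m"
proof -
  have "m \<le> - L"
  proof (rule dense_le)
    fix x assume "x < m"
    then obtain t where "x < ereal t" "ereal t < m" using ereal_dense2 by blast
    moreover have "ereal t \<le> - L"
      using assms[OF \<open>ereal t < m\<close>]
      by (metis ereal_minus_le_minus ereal_uminus_uminus uminus_ereal.simps(1))
    ultimately show "x \<le> - L" by simp
  qed
  then show ?thesis by (metis ereal_minus_le_minus ereal_uminus_uminus)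
qed

theorem corollary4p3:
  fixes \<mu> :: "('a::polish_space) measure" and \<nu> :: "('b::polish_space) measure"
    and c :: "'a \<Rightarrow> 'b \<Rightarrow> real"
    and \<pi> :: "real \<Rightarrow> ('a \<times> 'b) measure" and \<pi>\<^sub>s :: "('a \<times> 'b) measure"
    and C :: "('a \<times> 'b) set"
  assumes "prob_space \<mu>" and "sets \<mu> = sets borel"
    and "prob_space \<nu>" and "sets \<nu> = sets borel"
    and "continuous_on UNIV (\<lambda>z. c (fst z) (snd z))" and "\<forall>x y. 0 \<le> c x y"
    and "\<forall>\<epsilon>>0. cyclically_invariant c \<epsilon> \<mu> \<nu> (\<pi> \<epsilon>)"
    and "coupling \<mu> \<nu> \<pi>\<^sub>s" and "weak_conv_at0 \<pi> \<pi>\<^sub>s"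
    and "compact C"
  shows "Limsup (at_right 0) (\<lambda>\<epsilon>. eps_log \<epsilon> (measure (\<pi> \<epsilon>) C))
           \<le> - (INF z\<in>C. rate_I c (support \<pi>\<^sub>s) (fst z) (snd z))"
proof (rule ereal_le_uminus_dense)
  fix t assume t: "ereal t < (INF z\<in>C. rate_I c (support \<pi>\<^sub>s) (fst z) (snd z))"
  have Pe: "\<forall>\<epsilon>>0. finite_measure (\<pi> \<epsilon>) \<and> sets (\<pi> \<epsilon>) = sets borel"
  proof (intro allI impI)
    fix \<epsilon> :: real assume "\<epsilon> > 0"
    then have "cyclically_invariant c \<epsilon> \<mu> \<nu> (\<pi> \<epsilon>)" using assms(7) by blast
    from cyclically_invariant_prob_space_borel[OF this assms(2,4)]
    show "finite_measure (\<pi> \<epsilon>) \<and> sets (\<pi> \<epsilon>) = sets borel"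
      using prob_space.finite_measure by blast
  qed
  have local_bound: "\<forall>z\<in>C. \<exists>U. open U \<and> z \<in> U \<and> eventually (\<lambda>\<epsilon>. measure (\<pi> \<epsilon>) U \<le> exp (- t / \<epsilon>)) (at_right 0)"
  proof
    fix z assume "z \<in> C"
    then have "(INF z\<in>C. rate_I c (support \<pi>\<^sub>s) (fst z) (snd z)) \<le> rate_I c (support \<pi>\<^sub>s) (fst z) (snd z)"
      by (rule INF_lower)
    with t have "ereal t < rate_I c (support \<pi>\<^sub>s) (fst z) (snd z)" by (rule order_less_le_trans)
    from rate_I_local_upper_bound[OF assms(2-5,7-9) this]
    show "\<exists>U. open U \<and> z \<in> U \<and> eventually (\<lambda>\<epsilon>. measure (\<pi> \<epsilon>) U \<le> exp (- t / \<epsilon>)) (at_right 0)"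
      by simp
  qed
  obtain N :: nat where N: "eventually (\<lambda>\<epsilon>. measure (\<pi> \<epsilon>) C \<le> N * exp (- t / \<epsilon>)) (at_right 0)"
    using compact_finite_cover_eventually_measure_le[OF assms(10) Pe local_bound] by blast
  show "Limsup (at_right 0) (\<lambda>\<epsilon>. eps_log \<epsilon> (measure (\<pi> \<epsilon>) C)) \<le> ereal (- t)"
    by (rule Limsup_eps_log_le[OF _ _ N]) simp_all
qed

end
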